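(* Let $a,\alpha\in\mathbb R$, $\Delta t>0$, $h_x,h_y>0$ and $N_x,N_y\ge1$. Grid functions are arrays $(f_{ij})_{1\le i\le N_x,1\le j\le N_y}$ (values at cell centers $((i-\tfrac12)h_x,(j-\tfrac12)h_y)$), with discrete inner product $\langle f,g\rangle=h_xh_y\sum_{i,j}f_{ij}g_{ij}$. Let $\nabla_h^2=\Delta_h$ be the cell-centered discrete Laplacian with homogeneous Neumann boundary conditions, $$(\Delta_h\phi)_{ij}=\frac{\phi_{i+1,j}-2\phi_{ij}+\phi_{i-1,j}}{h_x^2}+\frac{\phi_{i,j+1}-2\phi_{ij}+\phi_{i,j-1}}{h_y^2},$$ with ghost values $\phi_{0,j}=\phi_{1,j}$, $\phi_{N_x+1,j}=\phi_{N_x,j}$, $\phi_{i,0}=\phi_{i,1}$, $\phi_{i,N_y+1}=\phi_{i,N_y}$, and let $\nabla_h^4=\Delta_h\Delta_h$. Let $n\ge1$ and let grid functions $\phi^{n-1},\phi^n,q^{n-1},q^n$ and a grid function $\bar M^{n+1/2}$ with $\langle\bar M^{n+1/2},1\rangle\ne0$ be given; set $\bar{q'}^{\,n+1/2}=\tfrac32(2\phi^n)-\tfrac12(2\phi^{n-1})$ (pointwise). Suppose grid functions $\phi^{n+1},q^{n+1}$ satisfy $$\phi^{n+1}-\phi^n=-\Delta t\,\bar M^{n+1/2}\big(\mu^{n+1/2}-L^{n+1/2}\big),\qquad q^{n+1}-q^n=\bar{q'}^{\,n+1/2}(\phi^{n+1}-\phi^n),$$ (products of grid functions taken pointwise), where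 $(\bullet)^{n+1/2}=\tfrac12[(\bullet)^{n+1}+(\bullet)^n]$, $$\mu^{n+1/2}=(\nabla_h^4\phi+2a\nabla_h^2\phi+\alpha\phi)^{n+1/2}+\tfrac12q^{n+1/2}\bar{q'}^{\,n+1/2},\qquad L^{n+1/2}=\frac{\langle\bar M^{n+1/2},\mu^{n+1/2}\rangle}{\langle\bar M^{n+1/2},1\rangle}.$$ Define the discrete energy $F^k=\big\langle\tfrac{\phi^k}{2}(\nabla_h^4+2a\nabla_h^2+\alpha)\phi^k+\tfrac{(q^k)^2}{4},1\big\rangle$. Then $$F^{n+1}-F^n=-\Delta t\,\big\langle\mu^{n+1/2}-L^{n+1/2},\,\bar M^{n+1/2}(\mu^{n+1/2}-L^{n+1/2})\big\rangle.$$
   Context: This is the fully discrete (finite-difference in space, linear Crank–Nicolson/extrapolation in time, energy quadratization $q=\phi^2$, $q'=2\phi$) scheme for the Allen–Cahn equation with a Lagrange multiplier enforcing mass conservation, for the phase-field crystal free energy $\int[\tfrac12|\nabla^2\phi|^2-a|\nabla\phi|^2+\tfrac\alpha2\phi^2+\tfrac14\phi^4]$. $\bar M^{n+1/2}$ represents the extrapolated mobility $\tfrac32M^n-\tfrac12M^{n-1}$. *)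

theory Defs
  imports Main "HOL.Real"
begin

type_synonym grid = "nat \<Rightarrow> nat \<Rightarrow> real"

text \<open>Grid functions are indexed by 1 \<le> i \<le> Nx, 1 \<le> j \<le> Ny; values outside are irrelevant.\<close>

definition ginner :: "nat \<Rightarrow> nat \<Rightarrow> real \<Rightarrow> real \<Rightarrow> grid \<Rightarrow> grid \<Rightarrow> real" where
  "ginner Nx Ny hx hy f g = hx * hy * (\<Sum>i\<in>{1..Nx}. \<Sum>j\<in>{1..Ny}. f i j * g i j)"

text \<open>Value with homogeneous Neumann ghost cells: index 0 reflects to 1, index N+1 to N.\<close>
definition ghost :: "nat \<Rightarrow> nat \<Rightarrow> grid \<Rightarrow> nat \<Rightarrow> nat \<Rightarrow> real" where
  "ghost Nx Ny f i j =
     f (if i = 0 then 1 else if i = Nx + 1 then Nx else i)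
       (if j = 0 then 1 else if j = Ny + 1 then Ny else j)"

definition lap :: "nat \<Rightarrow> nat \<Rightarrow> real \<Rightarrow> real \<Rightarrow> grid \<Rightarrow> grid" where
  "lap Nx Ny hx hy f = (\<lambda>i j.
     (ghost Nx Ny f (i + 1) j - 2 * f i j + ghost Nx Ny f (i - 1) j) / hx\<^sup>2
   + (ghost Nx Ny f i (j + 1) - 2 * f i j + ghost Nx Ny f i (j - 1)) / hy\<^sup>2)"

definition bilap :: "nat \<Rightarrow> nat \<Rightarrow> real \<Rightarrow> real \<Rightarrow> grid \<Rightarrow> grid" where
  "bilap Nx Ny hx hy f = lap Nx Ny hx hy (lap Nx Ny hx hy f)"

definition Lop :: "nat \<Rightarrow> nat \<Rightarrow> real \<Rightarrow> real \<Rightarrow> real \<Rightarrow> real \<Rightarrow> grid \<Rightarrow> grid" where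
  "Lop Nx Ny hx hy a \<alpha> f = (\<lambda>i j. bilap Nx Ny hx hy f i j + 2 * a * lap Nx Ny hx hy f i j + \<alpha> * f i j)"

definition energy :: "nat \<Rightarrow> nat \<Rightarrow> real \<Rightarrow> real \<Rightarrow> real \<Rightarrow> real \<Rightarrow> grid \<Rightarrow> grid \<Rightarrow> real" where
  "energy Nx Ny hx hy a \<alpha> \<phi> q =
     ginner Nx Ny hx hy (\<lambda>i j. \<phi> i j / 2 * Lop Nx Ny hx hy a \<alpha> \<phi> i j + (q i j)\<^sup>2 / 4) (\<lambda>_ _. 1)"

end

theory Submission imports Defs begin

(* Summation by parts makes the Neumann Laplacian, hence Lop = lap^2 + 2a lap + alpha,
   self-adjoint for the discrete inner product <_,_>.  For a self-adjoint linear operator the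
   quadratic part of F changes by <phi^(n+1) - phi^n, Lop phi^(n+1/2)>, and the q-update turns
   the change of <q^2/4, 1> into <phi^(n+1) - phi^n, q^(n+1/2) qbar / 2>.  Hence
   F^(n+1) - F^n = <phi^(n+1) - phi^n, mu>.  Inserting the phi-update, the second factor mu may
   be replaced by mu - L, because the multiplier L is chosen so that <M, mu - L> = 0.  The
   identity is purely algebraic. *)

definition neumann_diff2 :: "nat \<Rightarrow> (nat \<Rightarrow> real) \<Rightarrow> nat \<Rightarrow> real" where
  "neumann_diff2 N v i = v (if i = N then N else i + 1) - 2 * v i + v (if i = 1 then 1 else i - 1)"

lemma sum_neumann_diff2_by_parts:
  "(\<Sum>i\<in>{1..N}. u i * neumann_diff2 N v i)
     = - (\<Sum>i\<in>{1..<N}. (u (i + 1) - u i) * (v (i + 1) - v i))"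
proof -
  have forward: "(\<Sum>i\<in>{1..N}. u i * (v (if i = N then N else i + 1) - v i))
      = (\<Sum>i\<in>{1..<N}. u i * (v (i + 1) - v i))"
  proof -
    have "(\<Sum>i\<in>{1..N}. u i * (v (if i = N then N else i + 1) - v i))
        = (\<Sum>i\<in>{1..<N}. u i * (v (if i = N then N else i + 1) - v i))"
      by (rule sum.mono_neutral_right) auto
    then show ?thesis by simp
  qed
  have backward: "(\<Sum>i\<in>{1..N}. u i * (v (if i = 1 then 1 else i - 1) - v i))
      = - (\<Sum>i\<in>{1..<N}. u (i + 1) * (v (i + 1) - v i))"
  proof -
    have "(\<Sum>i\<in>{1..N}. u i * (v (if i = 1 then 1 else i - 1) - v i))
        = (\<Sum>i\<in>Suc ` {1..<N}. u i * (v (i - 1) - v i))"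
    proof (rule sum.mono_neutral_cong_right)
      show "\<forall>i\<in>{1..N} - Suc ` {1..<N}. u i * (v (if i = 1 then 1 else i - 1) - v i) = 0"
        by (auto simp: image_iff)
    qed auto
    also have "\<dots> = (\<Sum>i\<in>{1..<N}. u (i + 1) * (v i - v (i + 1)))"
      by (subst sum.reindex) auto
    finally show ?thesis by (simp add: sum_negf[symmetric] algebra_simps)
  qed
  have "(\<Sum>i\<in>{1..N}. u i * neumann_diff2 N v i)
      = (\<Sum>i\<in>{1..N}. u i * (v (if i = N then N else i + 1) - v i))
      + (\<Sum>i\<in>{1..N}. u i * (v (if i = 1 then 1 else i - 1) - v i))"
    unfolding neumann_diff2_def by (simp add: sum.distrib[symmetric] algebra_simps)
  also have "\<dots> = - (\<Sum>i\<in>{1..<N}. (u (i + 1) - u i) * (v (i + 1) - v i))"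
    unfolding forward backward sum_negf[symmetric] sum.distrib[symmetric]
    by (rule sum.cong) (simp_all add: algebra_simps)
  finally show ?thesis .
qed

lemma sum_neumann_diff2_commute:
  "(\<Sum>i\<in>{1..N}. u i * neumann_diff2 N v i) = (\<Sum>i\<in>{1..N}. v i * neumann_diff2 N u i)"
  unfolding sum_neumann_diff2_by_parts by (simp add: mult.commute)

lemma lap_eq_neumann_diff2:
  assumes "i \<in> {1..Nx}" "j \<in> {1..Ny}"
  shows "lap Nx Ny hx hy f i j
    = neumann_diff2 Nx (\<lambda>k. f k j) i / hx\<^sup>2 + neumann_diff2 Ny (f i) j / hy\<^sup>2"
  using assms unfolding lap_def ghost_def neumann_diff2_def by auto

lemma ginner_commute: "ginner Nx Ny hx hy f g = ginner Nx Ny hx hy g f"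
  unfolding ginner_def by (simp add: mult.commute)

lemma ginner_cong:
  assumes "\<And>i j. i \<in> {1..Nx} \<Longrightarrow> j \<in> {1..Ny} \<Longrightarrow> f i j * g i j = f' i j * g' i j"
  shows "ginner Nx Ny hx hy f g = ginner Nx Ny hx hy f' g'"
  unfolding ginner_def using assms by (intro arg_cong[where f = "(*) (hx * hy)"] sum.cong) auto

lemma ginner_add_right:
  "ginner Nx Ny hx hy f (\<lambda>i j. g i j + h i j) = ginner Nx Ny hx hy f g + ginner Nx Ny hx hy f h"
  unfolding ginner_def by (simp add: distrib_left sum.distrib)

lemma ginner_diff_right:
  "ginner Nx Ny hx hy f (\<lambda>i j. g i j - h i j) = ginner Nx Ny hx hy f g - ginner Nx Ny hx hy f h"
  unfolding ginner_def by (simp add: right_diff_distrib sum_subtractf)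

lemma ginner_scale_right:
  "ginner Nx Ny hx hy f (\<lambda>i j. c * g i j) = c * ginner Nx Ny hx hy f g"
  unfolding ginner_def by (simp add: sum_distrib_left algebra_simps)

lemma ginner_lap_commute:
  "ginner Nx Ny hx hy f (lap Nx Ny hx hy g) = ginner Nx Ny hx hy g (lap Nx Ny hx hy f)"
proof -
  have split: "ginner Nx Ny hx hy f (lap Nx Ny hx hy g) = hx * hy *
      ((\<Sum>j\<in>{1..Ny}. \<Sum>i\<in>{1..Nx}. f i j * neumann_diff2 Nx (\<lambda>k. g k j) i) / hx\<^sup>2
     + (\<Sum>i\<in>{1..Nx}. \<Sum>j\<in>{1..Ny}. f i j * neumann_diff2 Ny (g i) j) / hy\<^sup>2)" for f g
  proof -
    have "ginner Nx Ny hx hy f (lap Nx Ny hx hy g) = hx * hy * (\<Sum>i\<in>{1..Nx}. \<Sum>j\<in>{1..Ny}.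
        f i j * neumann_diff2 Nx (\<lambda>k. g k j) i / hx\<^sup>2 + f i j * neumann_diff2 Ny (g i) j / hy\<^sup>2)"
      unfolding ginner_def by (intro arg_cong[where f = "(*) (hx * hy)"] sum.cong refl)
        (simp add: lap_eq_neumann_diff2 ring_distribs)
    also have "\<dots> = hx * hy *
        ((\<Sum>i\<in>{1..Nx}. \<Sum>j\<in>{1..Ny}. f i j * neumann_diff2 Nx (\<lambda>k. g k j) i) / hx\<^sup>2
       + (\<Sum>i\<in>{1..Nx}. \<Sum>j\<in>{1..Ny}. f i j * neumann_diff2 Ny (g i) j) / hy\<^sup>2)"
      by (simp only: sum.distrib sum_divide_distrib)
    finally show ?thesis
      by (simp only: sum.swap[where A = "{1..Nx}"])
  qed
  show ?thesis
    unfolding split sum_neumann_diff2_commute[where u = "\<lambda>k. f k _"]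
      sum_neumann_diff2_commute[where u = "f _"] ..
qed

lemma lap_linear:
  "lap Nx Ny hx hy (\<lambda>i j. c * f i j + d * g i j)
     = (\<lambda>i j. c * lap Nx Ny hx hy f i j + d * lap Nx Ny hx hy g i j)"
  unfolding lap_def ghost_def by (simp add: fun_eq_iff add_divide_distrib diff_divide_distrib algebra_simps)

lemma Lop_linear:
  "Lop Nx Ny hx hy a \<alpha> (\<lambda>i j. c * f i j + d * g i j)
     = (\<lambda>i j. c * Lop Nx Ny hx hy a \<alpha> f i j + d * Lop Nx Ny hx hy a \<alpha> g i j)"
  unfolding Lop_def bilap_def lap_linear by (simp add: fun_eq_iff algebra_simps)

lemma ginner_Lop_commute:
  "ginner Nx Ny hx hy f (Lop Nx Ny hx hy a \<alpha> g) = ginner Nx Ny hx hy g (Lop Nx Ny hx hy a \<alpha> f)"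
proof -
  have bilap: "ginner Nx Ny hx hy f (bilap Nx Ny hx hy g)
      = ginner Nx Ny hx hy g (bilap Nx Ny hx hy f)" for f g
    unfolding bilap_def by (metis ginner_lap_commute ginner_commute)
  show ?thesis
    unfolding Lop_def ginner_add_right ginner_scale_right bilap ginner_lap_commute[of _ _ _ _ f]
    by (simp add: ginner_commute)
qed

lemma ginner_quadratic_form_diff:
  assumes "ginner Nx Ny hx hy p (A q) = ginner Nx Ny hx hy q (A p)"
  shows "ginner Nx Ny hx hy (\<lambda>i j. p i j / 2 * A p i j) (\<lambda>_ _. 1)
       - ginner Nx Ny hx hy (\<lambda>i j. q i j / 2 * A q i j) (\<lambda>_ _. 1)
       = ginner Nx Ny hx hy (\<lambda>i j. p i j - q i j) (\<lambda>i j. (A p i j + A q i j) / 2)"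
proof -
  have "ginner Nx Ny hx hy (\<lambda>i j. p i j - q i j) (\<lambda>i j. (A p i j + A q i j) / 2)
      = ginner Nx Ny hx hy
          (\<lambda>i j. (p i j / 2 * A p i j - q i j / 2 * A q i j) + (p i j * A q i j - q i j * A p i j) / 2)
          (\<lambda>_ _. 1)"
    by (rule ginner_cong) (simp add: field_simps)
  also have "\<dots> = ginner Nx Ny hx hy (\<lambda>i j. p i j / 2 * A p i j) (\<lambda>_ _. 1)
        - ginner Nx Ny hx hy (\<lambda>i j. q i j / 2 * A q i j) (\<lambda>_ _. 1)
        + (ginner Nx Ny hx hy p (A q) - ginner Nx Ny hx hy q (A p)) / 2"
    unfolding ginner_def
    by (simp add: sum.distrib sum_subtractf sum_divide_distrib[symmetric] ring_distribs diff_divide_distrib)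
  finally show ?thesis using assms by simp
qed

lemma energy_diff_eq_ginner_increment:
  assumes q_step: "\<forall>i\<in>{1..Nx}. \<forall>j\<in>{1..Ny}. qp i j - qn i j = r i j * (\<phi>p i j - \<phi>n i j)"
  shows "energy Nx Ny hx hy a \<alpha> \<phi>p qp - energy Nx Ny hx hy a \<alpha> \<phi>n qn
       = ginner Nx Ny hx hy (\<lambda>i j. \<phi>p i j - \<phi>n i j)
           (\<lambda>i j. Lop Nx Ny hx hy a \<alpha> (\<lambda>i j. (\<phi>p i j + \<phi>n i j) / 2) i j
                  + 1/2 * ((qp i j + qn i j) / 2) * r i j)"
proof -
  let ?L = "Lop Nx Ny hx hy a \<alpha>" and ?ip = "ginner Nx Ny hx hy"
  have energy_split: "energy Nx Ny hx hy a \<alpha> f g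
      = ?ip (\<lambda>i j. f i j / 2 * ?L f i j) (\<lambda>_ _. 1) + ?ip (\<lambda>i j. (g i j)\<^sup>2 / 4) (\<lambda>_ _. 1)" for f g
    unfolding energy_def ginner_def by (simp add: sum.distrib distrib_left)
  have halves: "(\<lambda>i j. (\<phi>p i j + \<phi>n i j) / 2) = (\<lambda>i j. 1/2 * \<phi>p i j + 1/2 * \<phi>n i j)"
    by (simp add: fun_eq_iff field_simps)
  have midpoint: "?L (\<lambda>i j. (\<phi>p i j + \<phi>n i j) / 2) = (\<lambda>i j. (?L \<phi>p i j + ?L \<phi>n i j) / 2)"
    unfolding halves Lop_linear by (simp add: fun_eq_iff)
  have quadratic_part: "?ip (\<lambda>i j. \<phi>p i j / 2 * ?L \<phi>p i j) (\<lambda>_ _. 1)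
      - ?ip (\<lambda>i j. \<phi>n i j / 2 * ?L \<phi>n i j) (\<lambda>_ _. 1)
      = ?ip (\<lambda>i j. \<phi>p i j - \<phi>n i j) (?L (\<lambda>i j. (\<phi>p i j + \<phi>n i j) / 2))"
    unfolding midpoint
    using ginner_quadratic_form_diff[where A = ?L and p = \<phi>p and q = \<phi>n, OF ginner_Lop_commute] by simp
  have "?ip (\<lambda>i j. \<phi>p i j - \<phi>n i j) (\<lambda>i j. 1/2 * ((qp i j + qn i j) / 2) * r i j)
      = ?ip (\<lambda>i j. (qp i j)\<^sup>2 / 4 - (qn i j)\<^sup>2 / 4) (\<lambda>_ _. 1)"
  proof (rule ginner_cong)
    fix i j assume "i \<in> {1..Nx}" "j \<in> {1..Ny}"
    then have "qp i j - qn i j = r i j * (\<phi>p i j - \<phi>n i j)" using q_step by blast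
    then have qp: "qp i j = qn i j + r i j * (\<phi>p i j - \<phi>n i j)" by simp
    show "(\<phi>p i j - \<phi>n i j) * (1/2 * ((qp i j + qn i j) / 2) * r i j)
        = ((qp i j)\<^sup>2 / 4 - (qn i j)\<^sup>2 / 4) * 1"
      unfolding qp by (simp add: power2_eq_square field_simps)
  qed
  also have "\<dots> = ?ip (\<lambda>i j. (qp i j)\<^sup>2 / 4) (\<lambda>_ _. 1) - ?ip (\<lambda>i j. (qn i j)\<^sup>2 / 4) (\<lambda>_ _. 1)"
    unfolding ginner_def by (simp add: sum_subtractf right_diff_distrib)
  finally have auxiliary_part: "?ip (\<lambda>i j. (qp i j)\<^sup>2 / 4) (\<lambda>_ _. 1)
      - ?ip (\<lambda>i j. (qn i j)\<^sup>2 / 4) (\<lambda>_ _. 1)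
      = ?ip (\<lambda>i j. \<phi>p i j - \<phi>n i j) (\<lambda>i j. 1/2 * ((qp i j + qn i j) / 2) * r i j)" ..
  show ?thesis
    unfolding energy_split ginner_add_right using quadratic_part auxiliary_part by simp
qed

lemma ginner_weighted_mean_deviation:
  assumes "ginner Nx Ny hx hy M (\<lambda>_ _. 1) \<noteq> 0"
    and "L = ginner Nx Ny hx hy M \<mu> / ginner Nx Ny hx hy M (\<lambda>_ _. 1)"
  shows "ginner Nx Ny hx hy (\<lambda>i j. M i j * (\<mu> i j - L)) \<mu>
       = ginner Nx Ny hx hy (\<lambda>i j. \<mu> i j - L) (\<lambda>i j. M i j * (\<mu> i j - L))"
proof -
  have const_right: "ginner Nx Ny hx hy f (\<lambda>_ _. L) = L * ginner Nx Ny hx hy f (\<lambda>_ _. 1)" for f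
    using ginner_scale_right[of Nx Ny hx hy f L "\<lambda>_ _. 1"] by simp
  have mass: "ginner Nx Ny hx hy M (\<lambda>i j. \<mu> i j - L) = 0"
    unfolding ginner_diff_right const_right using assms by simp
  have "ginner Nx Ny hx hy (\<lambda>i j. \<mu> i j - L) (\<lambda>i j. M i j * (\<mu> i j - L))
      = ginner Nx Ny hx hy (\<lambda>i j. M i j * (\<mu> i j - L)) (\<lambda>i j. \<mu> i j - L)"
    by (rule ginner_commute)
  also have "\<dots> = ginner Nx Ny hx hy (\<lambda>i j. M i j * (\<mu> i j - L)) \<mu>
      - L * ginner Nx Ny hx hy (\<lambda>i j. M i j * (\<mu> i j - L)) (\<lambda>_ _. 1)"
    unfolding ginner_diff_right const_right ..
  also have "ginner Nx Ny hx hy (\<lambda>i j. M i j * (\<mu> i j - L)) (\<lambda>_ _. 1)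
      = ginner Nx Ny hx hy M (\<lambda>i j. \<mu> i j - L)"
    by (rule ginner_cong) simp
  finally show ?thesis using mass by simp
qed

theorem theorem4p3:
  fixes a \<alpha> dt hx hy :: real
    and Nx Ny n :: nat
    and \<phi>m \<phi>n \<phi>p qm qn qp Mbar :: grid
    and qbar \<phi>h qh \<mu> :: grid
    and L :: real
  assumes "dt > 0" and "hx > 0" and "hy > 0" and "Nx \<ge> 1" and "Ny \<ge> 1" and "n \<ge> 1"
    and "ginner Nx Ny hx hy Mbar (\<lambda>_ _. 1) \<noteq> 0"
    and qbar_def: "qbar = (\<lambda>i j. 3/2 * (2 * \<phi>n i j) - 1/2 * (2 * \<phi>m i j))"
    and \<phi>h_def: "\<phi>h = (\<lambda>i j. (\<phi>p i j + \<phi>n i j) / 2)"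
    and qh_def: "qh = (\<lambda>i j. (qp i j + qn i j) / 2)"
    and \<mu>_def: "\<mu> = (\<lambda>i j. Lop Nx Ny hx hy a \<alpha> \<phi>h i j + 1/2 * qh i j * qbar i j)"
    and L_def: "L = ginner Nx Ny hx hy Mbar \<mu> / ginner Nx Ny hx hy Mbar (\<lambda>_ _. 1)"
    and phi_eq: "\<forall>i\<in>{1..Nx}. \<forall>j\<in>{1..Ny}. \<phi>p i j - \<phi>n i j = - dt * Mbar i j * (\<mu> i j - L)"
    and q_eq: "\<forall>i\<in>{1..Nx}. \<forall>j\<in>{1..Ny}. qp i j - qn i j = qbar i j * (\<phi>p i j - \<phi>n i j)"
  shows "energy Nx Ny hx hy a \<alpha> \<phi>p qp - energy Nx Ny hx hy a \<alpha> \<phi>n qn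
         = - dt * ginner Nx Ny hx hy (\<lambda>i j. \<mu> i j - L) (\<lambda>i j. Mbar i j * (\<mu> i j - L))"
proof -
  have "energy Nx Ny hx hy a \<alpha> \<phi>p qp - energy Nx Ny hx hy a \<alpha> \<phi>n qn
      = ginner Nx Ny hx hy (\<lambda>i j. \<phi>p i j - \<phi>n i j) \<mu>"
    unfolding \<mu>_def \<phi>h_def qh_def by (rule energy_diff_eq_ginner_increment[OF q_eq])
  also have "\<dots> = ginner Nx Ny hx hy \<mu> (\<lambda>i j. - dt * (Mbar i j * (\<mu> i j - L)))"
  proof (rule ginner_cong)
    fix i j assume "i \<in> {1..Nx}" "j \<in> {1..Ny}"
    then have step: "\<phi>p i j - \<phi>n i j = - dt * Mbar i j * (\<mu> i j - L)" using phi_eq by blast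
    show "(\<phi>p i j - \<phi>n i j) * \<mu> i j = \<mu> i j * (- dt * (Mbar i j * (\<mu> i j - L)))"
      unfolding step by (simp add: algebra_simps)
  qed
  also have "\<dots> = - dt * ginner Nx Ny hx hy (\<lambda>i j. Mbar i j * (\<mu> i j - L)) \<mu>"
    unfolding ginner_scale_right by (simp add: ginner_commute)
  also have "\<dots> = - dt * ginner Nx Ny hx hy (\<lambda>i j. \<mu> i j - L) (\<lambda>i j. Mbar i j * (\<mu> i j - L))"
    using ginner_weighted_mean_deviation[OF assms(7) L_def] by simp
  finally show ?thesis .
qed

end
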